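(* Consider two distinct regions $A$ and $B$ containing $N_A$ and $N_B$ voxels. For each voxel $i$ of $A$ the observed variable is $Y_i^A = X_i^A + \epsilon_i^A$, and similarly $Y_j^B = X_j^B+\epsilon_j^B$ for voxels $j$ of $B$. Assume $\mathrm{Var}(X_i^A)=\sigma_A^2>0$, $\mathrm{Var}(\epsilon_i^A)=\gamma_A^2$ for all $i$, and $\mathrm{Var}(X_j^B)=\sigma_B^2>0$, $\mathrm{Var}(\epsilon_j^B)=\gamma_B^2$ for all $j$; the noise variables are uncorrelated with each other (within and across regions) and uncorrelated with all latent variables; $\eta^A_{i,i'}=\mathrm{Cor}(X_i^A,X_{i'}^A)$, $\eta^B_{j,j'}=\mathrm{Cor}(X_j^B,X_{j'}^B)$ are arbitrary latent intra-correlations; and $\mathrm{Cor}(X_i^A,X_j^B)=\rho^{A,B}$ for all $i,j$. One observes $n$ i.i.d. (over $t=1,\dots,n$) copies of the whole vector of observed variables, and $\mathbf{Y}_i^A=(Y_i^A(1),\dots,Y_i^A(n))$. Fix a partition of the voxels of $A$ into $N^{clust}_A$ nonempty clusters and of the voxels of $B$ into $N^{clust}_B$ nonempty clusters. For clusters $\nu_A,\nu_B$ let $\overline{\mathbf{Y}}^{\nu_A}=|\nu_A|^{-1}\sum_{i\in\nu_A}\mathbf{Y}_i^A$, $\overline{\mathbf{Y}}^{\nu_B}=|\nu_B|^{-1}\sum_{j\in\nu_B}\mathbf{Y}_j^B$, $r^{CLA}_{\nu_A,\nu_B}=\widehat{Cor}(\overline{\mathbf{Y}}^{\nu_A},\overline{\mathbf{Y}}^{\nu_B})$,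 and $$r^{CLA}_{A,B}=\frac{1}{N^{clust}_A N^{clust}_B}\sum_{\nu_A,\nu_B} r^{CLA}_{\nu_A,\nu_B},$$ the sum being over all pairs of clusters of $A$ and $B$. Then, as $n\to\infty$, $$r^{CLA}_{A,B}\xrightarrow{a.s.}\frac{1}{N^{clust}_A N^{clust}_B}\sum_{\nu_A,\nu_B}\rho^{CLA}_{\nu_A,\nu_B},$$ where $$\rho^{CLA}_{\nu_A,\nu_B}=\frac{\rho^{A,B}}{\sqrt{\left[\frac{1}{|\nu_A|^2}\sum_{i,i'\in\nu_A}\eta^A_{i,i'}+\frac{\gamma_A^2}{|\nu_A|\sigma_A^2}\right]\left[\frac{1}{|\nu_B|^2}\sum_{j,j'\in\nu_B}\eta^B_{j,j'}+\frac{\gamma_B^2}{|\nu_B|\sigma_B^2}\right]}}.$$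
   Context: Sample correlation: for $\mathbf{a},\mathbf{b}\in\mathbb{R}^n$ with means $\bar a,\bar b$, let $\mathbf{a}^c=\mathbf{a}-\bar a\mathbf{1}_n$, $\mathbf{b}^c=\mathbf{b}-\bar b\mathbf{1}_n$; $\widehat{Cov}(\mathbf{a},\mathbf{b})=n^{-1}\langle\mathbf{a}^c,\mathbf{b}^c\rangle$, $\widehat{Var}(\mathbf{a})=n^{-1}\|\mathbf{a}^c\|^2$, $\widehat{Cor}(\mathbf{a},\mathbf{b})=\widehat{Cov}(\mathbf{a},\mathbf{b})/\sqrt{\widehat{Var}(\mathbf{a})\widehat{Var}(\mathbf{b})}$. All variables have finite second moments. The clusters are fixed (non-random). *)

theory Defs
  imports "HOL-Probability.Probability" "HOL-Library.Disjoint_Sets"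
begin

definition pexp :: "'w measure \<Rightarrow> ('w \<Rightarrow> real) \<Rightarrow> real" where
  "pexp M X = integral\<^sup>L M X"

definition pcov :: "'w measure \<Rightarrow> ('w \<Rightarrow> real) \<Rightarrow> ('w \<Rightarrow> real) \<Rightarrow> real" where
  "pcov M X Y = integral\<^sup>L M (\<lambda>w. (X w - pexp M X) * (Y w - pexp M Y))"

definition pvar :: "'w measure \<Rightarrow> ('w \<Rightarrow> real) \<Rightarrow> real" where
  "pvar M X = integral\<^sup>L M (\<lambda>w. (X w - pexp M X)\<^sup>2)"

definition pcor :: "'w measure \<Rightarrow> ('w \<Rightarrow> real) \<Rightarrow> ('w \<Rightarrow> real) \<Rightarrow> real" where
  "pcor M X Y = pcov M X Y / sqrt (pvar M X * pvar M Y)"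

definition smean :: "nat \<Rightarrow> (nat \<Rightarrow> real) \<Rightarrow> real" where
  "smean n a = (\<Sum>t<n. a t) / real n"

definition scov :: "nat \<Rightarrow> (nat \<Rightarrow> real) \<Rightarrow> (nat \<Rightarrow> real) \<Rightarrow> real" where
  "scov n a b = (\<Sum>t<n. (a t - smean n a) * (b t - smean n b)) / real n"

definition svar :: "nat \<Rightarrow> (nat \<Rightarrow> real) \<Rightarrow> real" where
  "svar n a = (\<Sum>t<n. (a t - smean n a)\<^sup>2) / real n"

definition scor :: "nat \<Rightarrow> (nat \<Rightarrow> real) \<Rightarrow> (nat \<Rightarrow> real) \<Rightarrow> real" where
  "scor n a b = scov n a b / sqrt (svar n a * svar n b)"

end

theory Submission
  imports Defs
begin

text \<open>
  Let \<open>Y\<^sub>t\<close> be the vector of all observations at time \<open>t\<close>; the \<open>Y\<^sub>t\<close> are i.i.d.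
  For a pair of clusters, \<open>r\<^sup>C\<^sup>L\<^sup>A\<close> is the sample correlation of \<open>f(Y\<^sub>t)\<close> and \<open>g(Y\<^sub>t)\<close>,
  where \<open>f\<close> and \<open>g\<close> are the two cluster means, so it is a continuous function of the sample
  means of \<open>f, g, f g, f\<^sup>2, g\<^sup>2\<close>. By the strong law of large numbers these converge almost
  surely, hence the sample correlation tends to the population correlation of \<open>f(Y\<^sub>0)\<close> and
  \<open>g(Y\<^sub>0)\<close>, which bilinearity of the covariance and the uncorrelatedness hypotheses evaluate
  to \<open>\<rho>\<^sup>C\<^sup>L\<^sup>A\<close>. If a cluster mean has variance zero, it is almost surely constant in time, and
  the sample correlation, the population correlation and \<open>\<rho>\<^sup>C\<^sup>L\<^sup>A\<close> all vanish by the convention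
  \<open>x / 0 = 0\<close>. Averaging over the finitely many pairs of clusters preserves the convergence.

  The strong law is proved following Etemadi: for nonnegative variables, truncate \<open>X\<^sub>t\<close> at
  level \<open>t\<close>; the truncated sums satisfy Chebyshev bounds that are summable along the sparse
  subsequences \<open>\<lfloor>\<alpha>\<^sup>m\<rfloor>\<close>, \<open>\<alpha> > 1\<close>, so Borel-Cantelli gives convergence along them, and
  monotonicity of the partial sums interpolates between consecutive terms.
\<close>

section \<open>Cesaro means and geometric subsequences\<close>

lemma cesaro_mean_tendsto:
  fixes a :: "nat \<Rightarrow> real"
  assumes "a \<longlonglongrightarrow> L"
  shows "(\<lambda>n. (\<Sum>t<n. a t) / real n) \<longlonglongrightarrow> L"
proof (rule LIMSEQ_I)
  fix r :: real assume r: "0 < r"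
  obtain N where N: "\<And>t. t \<ge> N \<Longrightarrow> \<bar>a t - L\<bar> < r/2"
    using LIMSEQ_D[OF assms, of "r/2"] r by auto
  define C where "C = (\<Sum>t<N. \<bar>a t - L\<bar>)"
  show "\<exists>n0. \<forall>n\<ge>n0. norm ((\<Sum>t<n. a t) / real n - L) < r"
  proof (intro exI allI impI)
    fix n assume n: "n \<ge> max (N + 1) (nat \<lceil>2 * C / r\<rceil> + 1)"
    then have "n \<ge> N" "n > 0" by auto
    have "real n > 2 * C / r" using n by linarith
    then have "C < real n * (r/2)" using r by (simp add: field_simps)
    have split: "{..<n} = {..<N} \<union> {N..<n}" using \<open>n \<ge> N\<close> by auto
    have "\<bar>\<Sum>t<n. a t - L\<bar> \<le> (\<Sum>t<n. \<bar>a t - L\<bar>)" by (rule sum_abs)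
    also have "\<dots> = C + (\<Sum>t\<in>{N..<n}. \<bar>a t - L\<bar>)"
      unfolding C_def split by (subst sum.union_disjoint) auto
    also have "(\<Sum>t\<in>{N..<n}. \<bar>a t - L\<bar>) \<le> (\<Sum>t\<in>{N..<n}. r/2)"
      using N by (intro sum_mono) (auto intro: less_imp_le)
    also have "\<dots> \<le> real n * (r/2)" using r by simp
    finally have "\<bar>\<Sum>t<n. a t - L\<bar> < real n * r"
      using \<open>C < real n * (r/2)\<close> by simp
    moreover have "(\<Sum>t<n. a t) / real n - L = (\<Sum>t<n. a t - L) / real n"
      using \<open>n > 0\<close> by (simp add: sum_subtractf field_simps)
    ultimately show "norm ((\<Sum>t<n. a t) / real n - L) < r"
      using \<open>n > 0\<close> by (simp add: field_simps)
  qed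
qed

lemma mean_tendsto_if_eventually_eq:
  fixes a b :: "nat \<Rightarrow> real"
  assumes "\<forall>\<^sub>F t in sequentially. a t = b t" and "(\<lambda>n. (\<Sum>t<n. a t) / n) \<longlonglongrightarrow> L"
  shows "(\<lambda>n. (\<Sum>t<n. b t) / n) \<longlonglongrightarrow> L"
proof -
  obtain N where N: "\<And>t. t \<ge> N \<Longrightarrow> a t = b t"
    using assms(1) unfolding eventually_sequentially by blast
  define D where "D = (\<Sum>t<N. b t - a t)"
  have "(\<Sum>t<n. b t) / n = (\<Sum>t<n. a t) / n + D / n" if "n \<ge> N" for n
  proof -
    have split: "{..<n} = {..<N} \<union> {N..<n}" using that by auto
    have "(\<Sum>t<n. b t - a t) = D"
      unfolding D_def split using N by (subst sum.union_disjoint) auto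
    then show ?thesis by (simp add: sum_subtractf add_divide_distrib[symmetric])
  qed
  then have "\<forall>\<^sub>F n in sequentially. (\<Sum>t<n. a t) / n + D / n = (\<Sum>t<n. b t) / n"
    unfolding eventually_sequentially by (intro exI[of _ N]) auto
  moreover have "(\<lambda>n. (\<Sum>t<n. a t) / n + D / n) \<longlonglongrightarrow> L + 0"
    by (intro tendsto_add assms(2) lim_const_over_n)
  ultimately show ?thesis using Lim_transform_eventually by fastforce
qed

lemma count_Suc_less_le:
  fixes x :: real
  assumes "0 \<le> x"
  shows "(\<Sum>t<N. if real t + 1 < x then 1 else 0) \<le> x"
proof -
  have "(\<Sum>t<N. if real t + 1 < x then 1 else 0) \<le> min (real N) x"
    using assms by (induction N) (auto simp: min_def split: if_splits)
  then show ?thesis by simp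
qed

lemma sum_truncated_square_ratio_le:
  fixes x :: real
  assumes x: "0 \<le> x"
  shows "(\<Sum>t<K. if x \<le> real t + 1 then x\<^sup>2 / (real t + 1)\<^sup>2 else 0) \<le> 2 * x"
proof -
  have "(\<Sum>t<K. if x \<le> real t + 1 then x\<^sup>2 / (real t + 1)\<^sup>2 else 0)
      \<le> 2 * x - 2 * x\<^sup>2 / max (real K + 1) x"
  proof (induction K)
    case 0
    show ?case
    proof (cases "x \<le> 1")
      case True
      then show ?thesis using x by (simp add: power2_eq_square mult_left_le)
    qed (simp add: power2_eq_square)
  next
    case (Suc K)
    show ?case
    proof (cases "x \<le> real K + 1")
      case True
      \<comment> \<open>telescoping: \<open>1/k\<^sup>2 \<le> 2/k - 2/(k + 1)\<close> for \<open>k \<ge> 1\<close>\<close>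
      have "2 * x\<^sup>2 / (real K + 1) - 2 * x\<^sup>2 / (real K + 2) - x\<^sup>2 / (real K + 1)\<^sup>2
          = x\<^sup>2 * real K / ((real K + 1)\<^sup>2 * (real K + 2))"
        by (simp add: divide_simps power2_eq_square) (simp add: algebra_simps)
      also have "\<dots> \<ge> 0" by simp
      finally have "x\<^sup>2 / (real K + 1)\<^sup>2 \<le> 2 * x\<^sup>2 / (real K + 1) - 2 * x\<^sup>2 / (real K + 2)"
        by simp
      moreover have "max (real K + 1) x = real K + 1" "max (real (Suc K) + 1) x = real K + 2"
        using True by auto
      ultimately show ?thesis using Suc.IH True by (simp add: add.commute)
    next
      case False
      have "2 * x\<^sup>2 / max (real (Suc K) + 1) x \<le> 2 * x\<^sup>2 / max (real K + 1) x"
        by (intro divide_left_mono) auto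
      then show ?thesis using Suc.IH False by simp
    qed
  qed
  also have "\<dots> \<le> 2 * x" by simp
  finally show ?thesis .
qed

lemma sum_geometric_below_le:
  fixes \<beta> b :: real
  assumes "0 < \<beta>" "\<beta> < 1" "0 \<le> b"
  shows "(\<Sum>m<M. if \<beta> ^ m \<le> b then \<beta> ^ m else 0) \<le> b / (1 - \<beta>)"
proof -
  have "(\<Sum>m<M. if \<beta> ^ m \<le> b then \<beta> ^ m else 0) \<le> (b - min b (\<beta> ^ M)) / (1 - \<beta>)"
  proof (induction M)
    case (Suc M)
    have dec: "\<beta> ^ Suc M \<le> \<beta> ^ M" using assms by (simp add: power_decreasing)
    show ?case
    proof (cases "\<beta> ^ M \<le> b")
      case True
      then have "min b (\<beta> ^ M) = \<beta> ^ M" "min b (\<beta> ^ Suc M) = \<beta> ^ Suc M" using dec by auto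
      moreover have "(b - \<beta> ^ M) / (1 - \<beta>) + \<beta> ^ M = (b - \<beta> ^ Suc M) / (1 - \<beta>)"
        using assms by (simp add: field_simps)
      ultimately show ?thesis using Suc.IH True by simp
    next
      case False
      have "min b (\<beta> ^ Suc M) \<le> min b (\<beta> ^ M)" using dec by (rule min.mono[OF order_refl])
      then have "(b - min b (\<beta> ^ M)) / (1 - \<beta>) \<le> (b - min b (\<beta> ^ Suc M)) / (1 - \<beta>)"
        using assms by (intro divide_right_mono) auto
      then show ?thesis using Suc.IH False by simp
    qed
  qed (use assms in \<open>simp add: min_def\<close>)
  also have "\<dots> \<le> b / (1 - \<beta>)"
    using assms by (intro divide_right_mono) (auto simp: min_def)
  finally show ?thesis .
qed

definition geom_floor :: "real \<Rightarrow> nat \<Rightarrow> nat" where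
  "geom_floor \<alpha> m = nat \<lfloor>\<alpha> ^ m\<rfloor>"

lemma geom_floor_ge_1: "1 < \<alpha> \<Longrightarrow> 1 \<le> geom_floor \<alpha> m"
  unfolding geom_floor_def by (simp add: one_le_power le_nat_floor)

lemma geom_floor_le: "1 < \<alpha> \<Longrightarrow> real (geom_floor \<alpha> m) \<le> \<alpha> ^ m"
  unfolding geom_floor_def by (simp add: one_le_power)

lemma geom_floor_mono: "1 < \<alpha> \<Longrightarrow> m \<le> m' \<Longrightarrow> geom_floor \<alpha> m \<le> geom_floor \<alpha> m'"
  unfolding geom_floor_def by (intro nat_mono floor_mono power_increasing) auto

lemma geom_floor_Suc_le:
  assumes "1 < \<alpha>"
  shows "real (geom_floor \<alpha> (Suc m)) \<le> \<alpha> * real (geom_floor \<alpha> m) + \<alpha>"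
proof -
  have "\<alpha> ^ m < real (geom_floor \<alpha> m) + 1"
    unfolding geom_floor_def using assms by simp
  then have "\<alpha> ^ Suc m \<le> \<alpha> * (real (geom_floor \<alpha> m) + 1)" using assms by simp
  then show ?thesis using geom_floor_le[OF assms, of "Suc m"] by (simp add: algebra_simps)
qed

lemma inverse_square_geom_floor_le:
  assumes "1 < \<alpha>"
  shows "1 / (real (geom_floor \<alpha> m))\<^sup>2 \<le> 4 * (1 / \<alpha>\<^sup>2) ^ m"
proof -
  have am: "1 \<le> \<alpha> ^ m" using assms by (simp add: one_le_power)
  then have "\<alpha> ^ m - 1 < of_int \<lfloor>\<alpha> ^ m\<rfloor>" "1 \<le> \<lfloor>\<alpha> ^ m\<rfloor>" by linarith+
  then have "\<alpha> ^ m / 2 \<le> real (geom_floor \<alpha> m)"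
    unfolding geom_floor_def by (cases "\<alpha> ^ m < 2") linarith+
  then have "(\<alpha> ^ m / 2)\<^sup>2 \<le> (real (geom_floor \<alpha> m))\<^sup>2"
    using am by (intro power_mono) auto
  then have "1 / (real (geom_floor \<alpha> m))\<^sup>2 \<le> 1 / (\<alpha> ^ m / 2)\<^sup>2"
    using am geom_floor_ge_1[OF assms, of m] by (intro divide_left_mono mult_pos_pos zero_less_power) auto
  also have "\<dots> = 4 * (1 / \<alpha>\<^sup>2) ^ m"
    by (simp add: power_one_over power_mult_distrib power_mult[symmetric] mult.commute field_simps)
  finally show ?thesis .
qed

lemma sum_inverse_square_geom_floor_le:
  assumes a: "1 < \<alpha>" and c: "1 \<le> c"
  shows "(\<Sum>m<M. if c \<le> real (geom_floor \<alpha> m) then 1 / (real (geom_floor \<alpha> m))\<^sup>2 else 0)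
    \<le> 4 / (c\<^sup>2 * (1 - 1 / \<alpha>\<^sup>2))"
proof -
  define \<beta> where "\<beta> = 1 / \<alpha>\<^sup>2"
  have \<beta>: "0 < \<beta>" "\<beta> < 1"
    using a unfolding \<beta>_def by (auto simp: power2_eq_square less_1_mult)
  have "(if c \<le> real (geom_floor \<alpha> m) then 1 / (real (geom_floor \<alpha> m))\<^sup>2 else 0)
      \<le> 4 * (if \<beta> ^ m \<le> 1 / c\<^sup>2 then \<beta> ^ m else 0)" for m
  proof (cases "c \<le> real (geom_floor \<alpha> m)")
    case True
    then have "c\<^sup>2 \<le> (\<alpha> ^ m)\<^sup>2"
      using c geom_floor_le[OF a, of m] by (intro power_mono) auto
    have "\<beta> ^ m = 1 / (\<alpha> ^ m)\<^sup>2"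
      unfolding \<beta>_def by (simp add: power_one_over flip: power_mult power_mult_distrib)
        (simp add: mult.commute)
    also have "\<dots> \<le> 1 / c\<^sup>2"
      using \<open>c\<^sup>2 \<le> (\<alpha> ^ m)\<^sup>2\<close> a c by (intro divide_left_mono mult_pos_pos) auto
    finally have "\<beta> ^ m \<le> 1 / c\<^sup>2" .
    then show ?thesis using True inverse_square_geom_floor_le[OF a] unfolding \<beta>_def by simp
  qed (use \<beta> in simp)
  then have "(\<Sum>m<M. if c \<le> real (geom_floor \<alpha> m) then 1 / (real (geom_floor \<alpha> m))\<^sup>2 else 0)
      \<le> 4 * (\<Sum>m<M. if \<beta> ^ m \<le> 1 / c\<^sup>2 then \<beta> ^ m else 0)"
    by (subst sum_distrib_left) (rule sum_mono)
  also have "\<dots> \<le> 4 * ((1 / c\<^sup>2) / (1 - \<beta>))"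
    by (intro mult_left_mono sum_geometric_below_le[OF \<beta>]) auto
  finally show ?thesis unfolding \<beta>_def by simp
qed

lemma filterlim_geom_floor_at_top:
  assumes "1 < \<alpha>"
  shows "filterlim (geom_floor \<alpha>) at_top sequentially"
  unfolding filterlim_at_top
proof
  fix Z :: nat
  obtain m0 where "real Z + 1 < \<alpha> ^ m0" using real_arch_pow[OF assms] by blast
  then have "Z \<le> geom_floor \<alpha> m0" unfolding geom_floor_def by linarith
  then show "\<forall>\<^sub>F m in sequentially. Z \<le> geom_floor \<alpha> m"
    unfolding eventually_sequentially using geom_floor_mono[OF assms] le_trans by blast
qed

lemma geom_floor_bracket:
  assumes a: "1 < \<alpha>" and n: "geom_floor \<alpha> m0 \<le> n"
  obtains m where "m0 \<le> m" "geom_floor \<alpha> m \<le> n" "n < geom_floor \<alpha> (Suc m)"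
proof -
  have "\<exists>m. n < geom_floor \<alpha> m"
    using filterlim_geom_floor_at_top[OF a] unfolding filterlim_at_top eventually_sequentially
    by (metis Suc_le_eq le_refl)
  define m' where "m' = (LEAST m. n < geom_floor \<alpha> m)"
  have above: "n < geom_floor \<alpha> m'"
    unfolding m'_def by (rule LeastI_ex) fact
  have below: "geom_floor \<alpha> m \<le> n" if "m < m'" for m
    using not_less_Least[of m "\<lambda>m. n < geom_floor \<alpha> m"] that unfolding m'_def by simp
  have "m0 < m'"
    using above n geom_floor_mono[OF a, of m' m0] by (cases "m0 < m'") auto
  then show ?thesis
    using that[of "m' - 1"] above below by simp
qed

lemma ratio_bounds_between:
  fixes T :: "nat \<Rightarrow> real"
  assumes inc: "incseq T" and nn: "\<And>n. 0 \<le> T n"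
    and n: "a \<le> n" "n \<le> b" and a: "1 \<le> a" and ratio: "real b \<le> c * real a"
    and close: "\<bar>T a / a - \<mu>\<bar> < \<delta>" "\<bar>T b / b - \<mu>\<bar> < \<delta>"
  shows "(\<mu> - \<delta>) / c \<le> T n / n" "T n / n \<le> (\<mu> + \<delta>) * c"
proof -
  define \<rho> where "\<rho> = real b / real a"
  have ab: "1 \<le> real a" "1 \<le> real b" using a n by auto
  have \<rho>: "0 < \<rho>" "\<rho> \<le> c" using ab ratio by (auto simp: \<rho>_def divide_le_eq mult.commute)
  have "T n / n \<le> T b / a"
    using incseqD[OF inc n(2)] n ab nn by (intro frac_le) auto
  also have "\<dots> = T b / b * \<rho>" using ab by (simp add: \<rho>_def)
  also have "\<dots> \<le> (\<mu> + \<delta>) * c"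
  proof (rule mult_mono)
    have "0 \<le> T b / b" using nn by simp
    then show "0 \<le> \<mu> + \<delta>" using close(2) by linarith
  qed (use close(2) \<rho> in auto)
  finally show "T n / n \<le> (\<mu> + \<delta>) * c" .
  have "(\<mu> - \<delta>) / c \<le> T a / a / \<rho>"
  proof (cases "\<mu> - \<delta> \<le> 0")
    case True
    then have "(\<mu> - \<delta>) / c \<le> 0" using \<rho> by (simp add: divide_nonpos_pos)
    also have "0 \<le> T a / a / \<rho>" using nn[of a] \<rho> by simp
    finally show ?thesis .
  qed (use close(1) \<rho> nn[of a] in \<open>intro frac_le, auto\<close>)
  also have "\<dots> = T a / b" using ab by (simp add: \<rho>_def)
  also have "\<dots> \<le> T n / n"
    using incseqD[OF inc n(1)] n ab nn by (intro frac_le) auto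
  finally show "(\<mu> - \<delta>) / c \<le> T n / n" .
qed

lemma eventually_ratio_bounds_geom_floor:
  fixes T :: "nat \<Rightarrow> real"
  assumes inc: "incseq T" and nn: "\<And>n. 0 \<le> T n" and a: "1 < \<alpha>" and d: "0 < \<delta>"
    and lim: "(\<lambda>m. T (geom_floor \<alpha> m) / geom_floor \<alpha> m) \<longlonglongrightarrow> \<mu>"
  shows "\<forall>\<^sub>F n in sequentially. (\<mu> - \<delta>) / (\<alpha> + \<delta>) \<le> T n / n \<and> T n / n \<le> (\<mu> + \<delta>) * (\<alpha> + \<delta>)"
proof -
  let ?k = "geom_floor \<alpha>"
  have "\<forall>\<^sub>F m in sequentially. \<bar>T (?k m) / ?k m - \<mu>\<bar> < \<delta>"
    using lim d by (auto simp: tendsto_iff dist_real_def)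
  moreover have "\<forall>\<^sub>F m in sequentially. \<alpha> / \<delta> \<le> ?k m"
  proof -
    obtain Z :: nat where "\<alpha> / \<delta> \<le> Z" using real_arch_simple by blast
    moreover have "\<forall>\<^sub>F m in sequentially. Z \<le> ?k m"
      using filterlim_geom_floor_at_top[OF a] unfolding filterlim_at_top by auto
    ultimately show ?thesis by (auto elim: eventually_mono)
  qed
  ultimately obtain M0 where M0: "\<And>m. m \<ge> M0 \<Longrightarrow> \<bar>T (?k m) / ?k m - \<mu>\<bar> < \<delta> \<and> \<alpha> / \<delta> \<le> ?k m"
    unfolding eventually_sequentially by (metis (full_types) eventually_conj eventually_sequentially)
  have "(\<mu> - \<delta>) / (\<alpha> + \<delta>) \<le> T n / n \<and> T n / n \<le> (\<mu> + \<delta>) * (\<alpha> + \<delta>)"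
    if n: "?k M0 \<le> n" for n
  proof -
    obtain m where m: "M0 \<le> m" "?k m \<le> n" "n < ?k (Suc m)"
      using geom_floor_bracket[OF a n] .
    have "\<alpha> \<le> \<delta> * ?k m" using M0[OF m(1)] d by (simp add: divide_le_eq mult.commute)
    then have "real (?k (Suc m)) \<le> (\<alpha> + \<delta>) * ?k m"
      using geom_floor_Suc_le[OF a, of m] by (simp add: algebra_simps)
    then show ?thesis
      using ratio_bounds_between[where b = "?k (Suc m)" and c = "\<alpha> + \<delta>" and \<mu> = \<mu> and \<delta> = \<delta>,
          OF inc nn m(2) _ geom_floor_ge_1[OF a]] M0[of m] M0[of "Suc m"] m by auto
  qed
  then show ?thesis unfolding eventually_sequentially by blast
qed

lemma tendsto_ratio_of_geom_floor_subsequences: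
  fixes T :: "nat \<Rightarrow> real"
  assumes inc: "incseq T" and nn: "\<And>n. 0 \<le> T n"
    and lim: "\<And>j. (\<lambda>m. T (geom_floor (1 + 1 / Suc j) m) / geom_floor (1 + 1 / Suc j) m) \<longlonglongrightarrow> \<mu>"
  shows "(\<lambda>n. T n / n) \<longlonglongrightarrow> \<mu>"
proof (rule LIMSEQ_I)
  fix r :: real assume r: "0 < r"
  define \<delta> where "\<delta> j = 1 / real (Suc j)" for j
  have "\<delta> \<longlonglongrightarrow> 0"
    unfolding \<delta>_def using LIMSEQ_inverse_real_of_nat by (simp add: inverse_eq_divide)
  then have "(\<lambda>j. (\<mu> + \<delta> j) * (1 + \<delta> j + \<delta> j)) \<longlonglongrightarrow> \<mu>"
    and "(\<lambda>j. (\<mu> - \<delta> j) / (1 + \<delta> j + \<delta> j)) \<longlonglongrightarrow> \<mu>"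
    by (auto intro!: tendsto_eq_intros)
  then have "\<forall>\<^sub>F j in sequentially.
      (\<mu> + \<delta> j) * (1 + \<delta> j + \<delta> j) < \<mu> + r \<and> \<mu> - r < (\<mu> - \<delta> j) / (1 + \<delta> j + \<delta> j)"
    using r by (intro eventually_conj order_tendstoD) auto
  then obtain j where j: "(\<mu> + \<delta> j) * (1 + \<delta> j + \<delta> j) < \<mu> + r"
    "\<mu> - r < (\<mu> - \<delta> j) / (1 + \<delta> j + \<delta> j)"
    using eventually_happens'[OF sequentially_bot] by blast
  have "\<forall>\<^sub>F n in sequentially.
      (\<mu> - \<delta> j) / (1 + \<delta> j + \<delta> j) \<le> T n / n \<and> T n / n \<le> (\<mu> + \<delta> j) * (1 + \<delta> j + \<delta> j)"
    using eventually_ratio_bounds_geom_floor[OF inc nn _ _ lim[of j], where \<delta> = "\<delta> j"]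
    unfolding \<delta>_def by simp
  then have "\<forall>\<^sub>F n in sequentially. norm (T n / n - \<mu>) < r"
    by eventually_elim (use j in auto)
  then show "\<exists>n0. \<forall>n\<ge>n0. norm (T n / n - \<mu>) < r"
    unfolding eventually_sequentially .
qed

lemma sum_geom_floor_block_means_le:
  fixes a :: "nat \<Rightarrow> real"
  assumes al: "1 < \<alpha>" and a0: "\<And>t. 0 \<le> a t"
    and B: "\<And>K. (\<Sum>t<K. a t / (real t + 1)\<^sup>2) \<le> B"
  shows "(\<Sum>m<M. (\<Sum>t<geom_floor \<alpha> m. a t) / (real (geom_floor \<alpha> m))\<^sup>2)
    \<le> 4 / (1 - 1 / \<alpha>\<^sup>2) * B"
proof -
  let ?k = "geom_floor \<alpha>"
  define K where "K = ?k M"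
  define w where "w t m = (if real t + 1 \<le> ?k m then 1 / (real (?k m))\<^sup>2 else 0)" for t m
  have "1 < \<alpha>\<^sup>2" using al by (metis less_1_mult power2_eq_square)
  then have "1 / \<alpha>\<^sup>2 < 1" by (auto simp: divide_less_eq)
  then have C: "0 \<le> 4 / (1 - 1 / \<alpha>\<^sup>2)" by simp
  have block: "(\<Sum>t<?k m. a t) / (real (?k m))\<^sup>2 = (\<Sum>t<K. a t * w t m)" if "m < M" for m
  proof -
    have "{t \<in> {..<K}. real t + 1 \<le> ?k m} = {..<?k m}"
      using that geom_floor_mono[OF al, of m M] by (auto simp: K_def)
    then show ?thesis
      by (simp add: w_def if_distrib sum.inter_filter[symmetric] sum_divide_distrib cong: if_cong)
  qed
  have "(\<Sum>m<M. (\<Sum>t<?k m. a t) / (real (?k m))\<^sup>2) = (\<Sum>t<K. a t * (\<Sum>m<M. w t m))"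
    by (simp add: block sum_distrib_left sum.swap[of _ "{..<M}"])
  also have "\<dots> \<le> (\<Sum>t<K. a t * (4 / ((real t + 1)\<^sup>2 * (1 - 1 / \<alpha>\<^sup>2))))"
    unfolding w_def by (intro sum_mono mult_left_mono a0 sum_inverse_square_geom_floor_le al) simp
  also have "\<dots> = 4 / (1 - 1 / \<alpha>\<^sup>2) * (\<Sum>t<K. a t / (real t + 1)\<^sup>2)"
    by (simp add: sum_distrib_left mult_ac)
  also have "\<dots> \<le> 4 / (1 - 1 / \<alpha>\<^sup>2) * B"
    by (rule mult_left_mono[OF B C])
  finally show ?thesis .
qed

section \<open>Etemadi's strong law of large numbers\<close>

lemma (in prob_space) AE_eventually_not_if_summable_prob:
  assumes [measurable]: "\<And>n. {w\<in>space M. P n w} \<in> events"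
    and "summable (\<lambda>n. prob {w\<in>space M. P n w})"
  shows "AE w in M. \<forall>\<^sub>F n in sequentially. \<not> P n w"
proof -
  have "AE w in M. \<forall>\<^sub>F n in sequentially. w \<in> space M - {w\<in>space M. P n w}"
    using assms by (intro borel_cantelli_AE1) (auto simp: emeasure_eq_measure)
  then show ?thesis
    by (rule AE_mp) (auto intro!: AE_I2 elim: eventually_mono)
qed

lemma integral_comp_eq_if_distr_eq:
  fixes g :: "'b \<Rightarrow> real"
  assumes "X \<in> measurable M N" "Y \<in> measurable M N" "distr M N X = distr M N Y"
    and "g \<in> borel_measurable N"
  shows "(\<integral>w. g (X w) \<partial>M) = (\<integral>w. g (Y w) \<partial>M)"
  using assms by (metis integral_distr)

lemma integrable_comp_iff_if_distr_eq:
  fixes g :: "'b \<Rightarrow> real"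
  assumes "X \<in> measurable M N" "Y \<in> measurable M N" "distr M N X = distr M N Y"
    and "g \<in> borel_measurable N"
  shows "integrable M (\<lambda>w. g (X w)) \<longleftrightarrow> integrable M (\<lambda>w. g (Y w))"
  using assms by (metis integrable_distr_eq)

lemma (in prob_space) iid_comp:
  assumes ind: "indep_vars (\<lambda>_. N) V UNIV" and ident: "\<And>t. distr M N (V t) = distr M N (V 0)"
    and g: "g \<in> measurable N K"
  shows "indep_vars (\<lambda>_. K) (\<lambda>t w. g (V t w)) UNIV"
    and "distr M K (\<lambda>w. g (V t w)) = distr M K (\<lambda>w. g (V 0 w))"
proof -
  show "indep_vars (\<lambda>_. K) (\<lambda>t w. g (V t w)) UNIV"
    using indep_vars_compose2[OF ind] g by simp
  have "V t \<in> measurable M N" for t using ind unfolding indep_vars_def by auto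
  then have "distr M K (\<lambda>w. g (V t w)) = distr (distr M N (V t)) K g" for t
    using g by (subst distr_distr) (auto simp: comp_def)
  then show "distr M K (\<lambda>w. g (V t w)) = distr M K (\<lambda>w. g (V 0 w))"
    using ident by metis
qed

text \<open>Etemadi's truncation \<open>X\<^sub>t 1{X\<^sub>t \<le> t}\<close>, shifted by one because time starts at \<open>t = 0\<close>.\<close>
definition trunc_at :: "nat \<Rightarrow> real \<Rightarrow> real" where
  "trunc_at t x = (if x \<le> real t + 1 then x else 0)"

lemma trunc_at_measurable [measurable]: "trunc_at t \<in> borel_measurable borel"
  unfolding trunc_at_def by measurable

locale iid_nonneg = prob_space +
  fixes X :: "nat \<Rightarrow> 'a \<Rightarrow> real"
  assumes indep: "indep_vars (\<lambda>_. borel) X UNIV"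
    and ident: "\<And>t. distr M borel (X t) = distr M borel (X 0)"
    and integrable_X0: "integrable M (X 0)"
    and nonneg: "\<And>t w. 0 \<le> X t w"
begin

lemma X_measurable [measurable]: "X t \<in> borel_measurable M"
  using indep unfolding indep_vars_def by auto

lemma expectation_comp_X:
  fixes g :: "real \<Rightarrow> real"
  assumes "g \<in> borel_measurable borel"
  shows "expectation (\<lambda>w. g (X t w)) = expectation (\<lambda>w. g (X 0 w))"
  by (rule integral_comp_eq_if_distr_eq[where X = "X t" and Y = "X 0" and N = borel])
    (use ident[of t] assms in simp_all)

lemma integrable_comp_X_iff:
  fixes g :: "real \<Rightarrow> real"
  assumes "g \<in> borel_measurable borel"
  shows "integrable M (\<lambda>w. g (X t w)) \<longleftrightarrow> integrable M (\<lambda>w. g (X 0 w))"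
  by (rule integrable_comp_iff_if_distr_eq[where X = "X t" and Y = "X 0" and N = borel])
    (use ident[of t] assms in simp_all)

definition trunc_X :: "nat \<Rightarrow> 'a \<Rightarrow> real" where
  "trunc_X t w = trunc_at t (X t w)"

definition trunc_sum :: "nat \<Rightarrow> 'a \<Rightarrow> real" where
  "trunc_sum n w = (\<Sum>t<n. trunc_X t w)"

lemma trunc_X_measurable [measurable]: "trunc_X t \<in> borel_measurable M"
  unfolding trunc_X_def by measurable

lemma trunc_sum_measurable [measurable]: "trunc_sum n \<in> borel_measurable M"
  unfolding trunc_sum_def by measurable

lemma trunc_X_bounds: "0 \<le> trunc_X t w" "trunc_X t w \<le> real t + 1"
  using nonneg[of t w] unfolding trunc_X_def trunc_at_def by auto

lemma integrable_trunc_X: "integrable M (trunc_X t)"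
  using trunc_X_bounds by (intro integrable_const_bound[where B = "real t + 1"]) auto

lemma integrable_trunc_X_square: "integrable M (\<lambda>w. (trunc_X t w)\<^sup>2)"
proof (intro integrable_const_bound[where B = "(real t + 1)\<^sup>2"] AE_I2)
  show "norm ((trunc_X t w)\<^sup>2) \<le> (real t + 1)\<^sup>2" for w
    using trunc_X_bounds[of t w] by (simp add: power_mono)
qed simp

lemma prob_X_greater: "prob {w\<in>space M. c < X t w} = expectation (\<lambda>w. indicator {c<..} (X 0 w))"
proof -
  have "{w\<in>space M. c < X t w} \<in> events" by measurable
  then have "prob {w\<in>space M. c < X t w} = expectation (indicator {w\<in>space M. c < X t w})" by simp
  also have "\<dots> = expectation (\<lambda>w. indicator {c<..} (X t w))"
    by (rule Bochner_Integration.integral_cong) (auto simp: indicator_def)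
  also have "\<dots> = expectation (\<lambda>w. indicator {c<..} (X 0 w))"
    by (rule expectation_comp_X) measurable
  finally show ?thesis .
qed

lemma AE_eventually_trunc_X_eq: "AE w in M. \<forall>\<^sub>F t in sequentially. trunc_X t w = X t w"
proof -
  have "summable (\<lambda>t. prob {w\<in>space M. real t + 1 < X t w})"
  proof (rule summableI_nonneg_bounded)
    fix n
    have "integrable M (\<lambda>w. indicator {real t + 1<..} (X 0 w) :: real)" for t
      by (rule integrable_const_bound[where B = 1]) (auto simp: indicator_def)
    then have "(\<Sum>t<n. prob {w\<in>space M. real t + 1 < X t w})
        = expectation (\<lambda>w. \<Sum>t<n. indicator {real t + 1<..} (X 0 w))"
      by (simp add: prob_X_greater integral_sum)
    also have "\<dots> \<le> expectation (X 0)"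
    proof (rule integral_mono'[OF integrable_X0])
      fix w
      have "(\<Sum>t<n. indicator {real t + 1<..} (X 0 w) :: real)
          = (\<Sum>t<n. if real t + 1 < X 0 w then 1 else 0)"
        by (intro sum.cong) (auto simp: indicator_def)
      also have "\<dots> \<le> X 0 w" by (rule count_Suc_less_le[OF nonneg])
      finally show "(\<Sum>t<n. indicator {real t + 1<..} (X 0 w) :: real) \<le> X 0 w" .
    qed (rule nonneg)
    finally show "(\<Sum>t<n. prob {w\<in>space M. real t + 1 < X t w}) \<le> expectation (X 0)" .
  qed simp
  then have "AE w in M. \<forall>\<^sub>F t in sequentially. \<not> real t + 1 < X t w"
    by (intro AE_eventually_not_if_summable_prob) measurable
  then show ?thesis
    by (rule AE_mp) (auto intro!: AE_I2 elim!: eventually_mono simp: trunc_X_def trunc_at_def)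
qed

lemma expectation_trunc_X_tendsto: "(\<lambda>t. expectation (trunc_X t)) \<longlonglongrightarrow> expectation (X 0)"
proof -
  have "expectation (trunc_X t) = expectation (\<lambda>w. trunc_at t (X 0 w))" for t
    unfolding trunc_X_def by (rule expectation_comp_X) measurable
  moreover have "(\<lambda>t. expectation (\<lambda>w. trunc_at t (X 0 w))) \<longlonglongrightarrow> expectation (X 0)"
  proof (rule integral_dominated_convergence[where w = "X 0"])
    show "AE w in M. (\<lambda>t. trunc_at t (X 0 w)) \<longlonglongrightarrow> X 0 w"
    proof (intro AE_I2 tendsto_eventually)
      fix w
      obtain N :: nat where "X 0 w \<le> real N" using real_arch_simple by blast
      then show "\<forall>\<^sub>F t in sequentially. trunc_at t (X 0 w) = X 0 w"
        unfolding eventually_sequentially trunc_at_def by (intro exI[of _ N]) auto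
    qed
    show "AE w in M. norm (trunc_at t (X 0 w)) \<le> X 0 w" for t
      using nonneg[of 0] by (intro AE_I2) (auto simp: trunc_at_def)
  qed (use integrable_X0 in auto)
  ultimately show ?thesis by simp
qed

lemma integrable_trunc_sum_square: "integrable M (\<lambda>w. (trunc_sum n w)\<^sup>2)"
proof (intro integrable_const_bound[where B = "(\<Sum>t<n. real t + 1)\<^sup>2"] AE_I2)
  show "norm ((trunc_sum n w)\<^sup>2) \<le> (\<Sum>t<n. real t + 1)\<^sup>2" for w
    unfolding trunc_sum_def using trunc_X_bounds
    by (simp add: power_mono sum_mono sum_nonneg)
qed simp

lemma expectation_trunc_X_bounds: "0 \<le> expectation (trunc_X t)" "expectation (trunc_X t) \<le> real t + 1"
proof -
  show "0 \<le> expectation (trunc_X t)" using trunc_X_bounds by (simp add: integral_nonneg)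
  have "expectation (trunc_X t) \<le> expectation (\<lambda>_. real t + 1)"
    using trunc_X_bounds integrable_trunc_X by (intro integral_mono) auto
  then show "expectation (trunc_X t) \<le> real t + 1" by (simp add: prob_space)
qed

lemma centered_trunc_X_bound: "\<bar>trunc_X t w - expectation (trunc_X t)\<bar> \<le> real t + 1"
  using trunc_X_bounds[of t w] expectation_trunc_X_bounds[of t] by linarith

lemma expectation_centered_trunc_X_mult_eq_0:
  assumes "s \<noteq> t"
  shows "expectation (\<lambda>w. (trunc_X s w - expectation (trunc_X s)) * (trunc_X t w - expectation (trunc_X t))) = 0"
proof -
  define Z where "Z i w = trunc_X i w - expectation (trunc_X i)" for i w
  have "indep_vars (\<lambda>_. borel) (\<lambda>i w. trunc_at i (X i w) - expectation (trunc_X i)) UNIV"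
    by (rule indep_vars_compose2[OF indep]) measurable
  then have "indep_vars (\<lambda>_. borel) Z {s, t}"
    unfolding Z_def trunc_X_def by (rule indep_vars_subset) auto
  moreover have "integrable M (Z i)" and "expectation (Z i) = 0" for i
    unfolding Z_def using integrable_trunc_X by (simp_all add: prob_space)
  ultimately have "expectation (\<lambda>w. \<Prod>i\<in>{s, t}. Z i w) = 0"
    by (subst indep_vars_lebesgue_integral) (auto simp: card_gt_0_iff)
  then show ?thesis using assms unfolding Z_def by simp
qed

lemma variance_trunc_sum: "variance (trunc_sum n) = (\<Sum>t<n. variance (trunc_X t))"
proof -
  define Z where "Z t w = trunc_X t w - expectation (trunc_X t)" for t w
  have int: "integrable M (\<lambda>w. Z s w * Z t w)" for s t
    unfolding Z_def using centered_trunc_X_bound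
    by (intro integrable_const_bound[where B = "(real s + 1) * (real t + 1)"] AE_I2)
      (auto simp: abs_mult intro!: mult_mono)
  have "trunc_sum n w - expectation (trunc_sum n) = (\<Sum>t<n. Z t w)" for w
    unfolding trunc_sum_def Z_def using integrable_trunc_X by (simp add: sum_subtractf)
  then have "variance (trunc_sum n) = (\<Sum>s<n. \<Sum>t<n. expectation (\<lambda>w. Z s w * Z t w))"
    using int by (simp add: power2_eq_square sum_product integrable_sum)
  also have "\<dots> = (\<Sum>s<n. expectation (\<lambda>w. Z s w * Z s w))"
  proof (rule sum.cong[OF refl])
    fix s assume "s \<in> {..<n}"
    then have "(\<Sum>t<n. expectation (\<lambda>w. Z s w * Z t w))
        = expectation (\<lambda>w. Z s w * Z s w) + (\<Sum>t\<in>{..<n} - {s}. expectation (\<lambda>w. Z s w * Z t w))"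
      by (simp add: sum.remove)
    also have "(\<Sum>t\<in>{..<n} - {s}. expectation (\<lambda>w. Z s w * Z t w)) = 0"
      unfolding Z_def by (intro sum.neutral) (auto simp: expectation_centered_trunc_X_mult_eq_0)
    finally show "(\<Sum>t<n. expectation (\<lambda>w. Z s w * Z t w)) = expectation (\<lambda>w. Z s w * Z s w)"
      by simp
  qed
  finally show ?thesis unfolding Z_def by (simp add: power2_eq_square)
qed

lemma sum_variance_trunc_X_le:
  "(\<Sum>t<K. variance (trunc_X t) / (real t + 1)\<^sup>2) \<le> 2 * expectation (X 0)"
proof -
  have "variance (trunc_X t) \<le> expectation (\<lambda>w. (trunc_at t (X 0 w))\<^sup>2)" for t
  proof -
    have "variance (trunc_X t) \<le> expectation (\<lambda>w. (trunc_X t w)\<^sup>2)"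
      using integrable_trunc_X integrable_trunc_X_square by (simp add: variance_eq)
    also have "\<dots> = expectation (\<lambda>w. (trunc_at t (X 0 w))\<^sup>2)"
      unfolding trunc_X_def by (rule expectation_comp_X) measurable
    finally show ?thesis .
  qed
  then have "(\<Sum>t<K. variance (trunc_X t) / (real t + 1)\<^sup>2)
      \<le> (\<Sum>t<K. expectation (\<lambda>w. (trunc_at t (X 0 w))\<^sup>2) / (real t + 1)\<^sup>2)"
    by (intro sum_mono divide_right_mono) auto
  also have "\<dots> = expectation (\<lambda>w. \<Sum>t<K. (trunc_at t (X 0 w))\<^sup>2 / (real t + 1)\<^sup>2)"
  proof -
    have "integrable M (\<lambda>w. (trunc_at t (X 0 w))\<^sup>2)" for t
      using integrable_trunc_X_square integrable_comp_X_iff[of "\<lambda>x. (trunc_at t x)\<^sup>2" t]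
      unfolding trunc_X_def by simp
    then show ?thesis by (simp add: integral_sum)
  qed
  also have "\<dots> \<le> expectation (\<lambda>w. 2 * X 0 w)"
  proof (rule integral_mono')
    fix w
    have "(\<Sum>t<K. (trunc_at t (X 0 w))\<^sup>2 / (real t + 1)\<^sup>2)
        = (\<Sum>t<K. if X 0 w \<le> real t + 1 then (X 0 w)\<^sup>2 / (real t + 1)\<^sup>2 else 0)"
      by (intro sum.cong) (auto simp: trunc_at_def)
    also have "\<dots> \<le> 2 * X 0 w" by (rule sum_truncated_square_ratio_le[OF nonneg])
    finally show "(\<Sum>t<K. (trunc_at t (X 0 w))\<^sup>2 / (real t + 1)\<^sup>2) \<le> 2 * X 0 w" .
  qed (use integrable_X0 nonneg in auto)
  finally show ?thesis by simp
qed

lemma AE_eventually_trunc_sum_geom_floor_close: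
  fixes \<epsilon> :: real
  assumes a: "1 < \<alpha>" and e: "0 < \<epsilon>"
  shows "AE w in M. \<forall>\<^sub>F m in sequentially.
    \<bar>trunc_sum (geom_floor \<alpha> m) w - expectation (trunc_sum (geom_floor \<alpha> m))\<bar> < \<epsilon> * geom_floor \<alpha> m"
proof -
  let ?k = "geom_floor \<alpha>"
  define A where "A m = {w\<in>space M. \<epsilon> * ?k m \<le> \<bar>trunc_sum (?k m) w - expectation (trunc_sum (?k m))\<bar>}" for m
  have [measurable]: "A m \<in> events" for m unfolding A_def by measurable
  have prob_A: "prob (A m) \<le> 1 / \<epsilon>\<^sup>2 * ((\<Sum>t<?k m. variance (trunc_X t)) / (real (?k m))\<^sup>2)" for m
  proof -
    have "0 < \<epsilon> * ?k m" using geom_floor_ge_1[OF a, of m] e by simp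
    then have "prob (A m) \<le> variance (trunc_sum (?k m)) / (\<epsilon> * ?k m)\<^sup>2"
      unfolding A_def by (intro Chebyshev_inequality integrable_trunc_sum_square) auto
    then show ?thesis by (simp add: variance_trunc_sum power_mult_distrib)
  qed
  have "summable (\<lambda>m. prob (A m))"
  proof (rule summableI_nonneg_bounded)
    fix M' :: nat
    have "(\<Sum>m<M'. prob (A m)) \<le> 1 / \<epsilon>\<^sup>2 * (\<Sum>m<M'. (\<Sum>t<?k m. variance (trunc_X t)) / (real (?k m))\<^sup>2)"
      unfolding sum_distrib_left by (intro sum_mono prob_A)
    also have "\<dots> \<le> 1 / \<epsilon>\<^sup>2 * (4 / (1 - 1 / \<alpha>\<^sup>2) * (2 * expectation (X 0)))"
      by (intro mult_left_mono sum_geom_floor_block_means_le[OF a variance_positive]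
          sum_variance_trunc_X_le) simp
    finally show "(\<Sum>m<M'. prob (A m)) \<le> 1 / \<epsilon>\<^sup>2 * (4 / (1 - 1 / \<alpha>\<^sup>2) * (2 * expectation (X 0)))" .
  qed simp
  then have "AE w in M. \<forall>\<^sub>F m in sequentially. \<not> (w \<in> space M \<and>
      \<epsilon> * ?k m \<le> \<bar>trunc_sum (?k m) w - expectation (trunc_sum (?k m))\<bar>)"
    by (intro AE_eventually_not_if_summable_prob) (auto simp: A_def)
  then show ?thesis by (rule AE_mp) (auto intro!: AE_I2 elim: eventually_mono)
qed

lemma AE_trunc_sum_geom_floor_deviation_tendsto:
  assumes a: "1 < \<alpha>"
  shows "AE w in M.
    (\<lambda>m. (trunc_sum (geom_floor \<alpha> m) w - expectation (trunc_sum (geom_floor \<alpha> m))) / geom_floor \<alpha> m)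
      \<longlonglongrightarrow> 0"
proof -
  let ?k = "geom_floor \<alpha>"
  let ?d = "\<lambda>m w. trunc_sum (?k m) w - expectation (trunc_sum (?k m))"
  have "AE w in M. \<forall>i. \<forall>\<^sub>F m in sequentially. \<bar>?d m w\<bar> < 1 / Suc i * ?k m"
    unfolding AE_all_countable by (intro allI AE_eventually_trunc_sum_geom_floor_close a) simp
  then show ?thesis
  proof (rule AE_mp, intro AE_I2 impI)
    fix w assume close: "\<forall>i. \<forall>\<^sub>F m in sequentially. \<bar>?d m w\<bar> < 1 / Suc i * ?k m"
    show "(\<lambda>m. ?d m w / ?k m) \<longlonglongrightarrow> 0"
    proof (rule tendstoI)
      fix r :: real assume "0 < r"
      then obtain i where i: "1 / Suc i < r"
        using reals_Archimedean by (auto simp: inverse_eq_divide)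
      from close have "\<forall>\<^sub>F m in sequentially. \<bar>?d m w\<bar> < 1 / Suc i * ?k m" ..
      then show "\<forall>\<^sub>F m in sequentially. dist (?d m w / ?k m) 0 < r"
      proof (rule eventually_mono)
        fix m assume "\<bar>?d m w\<bar> < 1 / Suc i * ?k m"
        also have "\<dots> \<le> r * ?k m" using i by (intro mult_right_mono) auto
        finally show "dist (?d m w / ?k m) 0 < r"
          using geom_floor_ge_1[OF a, of m] by (simp add: abs_divide divide_less_eq)
      qed
    qed
  qed
qed

theorem slln_nonneg: "AE w in M. (\<lambda>n. (\<Sum>t<n. X t w) / n) \<longlonglongrightarrow> expectation (X 0)"
proof -
  define \<alpha> where "\<alpha> j = 1 + 1 / real (Suc j)" for j
  have "AE w in M. \<forall>j. (\<lambda>m. (trunc_sum (geom_floor (\<alpha> j) m) w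
      - expectation (trunc_sum (geom_floor (\<alpha> j) m))) / geom_floor (\<alpha> j) m) \<longlonglongrightarrow> 0"
    unfolding AE_all_countable \<alpha>_def by (intro allI AE_trunc_sum_geom_floor_deviation_tendsto) simp
  with AE_eventually_trunc_X_eq show ?thesis
  proof eventually_elim
    case (elim w)
    have mean: "(\<lambda>n. expectation (trunc_sum n) / n) \<longlonglongrightarrow> expectation (X 0)"
      unfolding trunc_sum_def using integrable_trunc_X
      by (simp add: cesaro_mean_tendsto[OF expectation_trunc_X_tendsto])
    have "(\<lambda>m. trunc_sum (geom_floor (\<alpha> j) m) w / geom_floor (\<alpha> j) m) \<longlonglongrightarrow> expectation (X 0)" for j
      using tendsto_add[OF elim(2)[rule_format, of j]
          filterlim_compose[OF mean filterlim_geom_floor_at_top, of "\<alpha> j"]]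
      by (simp add: \<alpha>_def diff_divide_distrib)
    then have "(\<lambda>n. trunc_sum n w / n) \<longlonglongrightarrow> expectation (X 0)"
      using trunc_X_bounds unfolding \<alpha>_def
      by (intro tendsto_ratio_of_geom_floor_subsequences)
        (auto intro!: incseq_SucI simp: trunc_sum_def sum_nonneg)
    then show ?case
      unfolding trunc_sum_def by (rule mean_tendsto_if_eventually_eq[OF elim(1)])
  qed
qed

end

theorem (in prob_space) slln:
  fixes X :: "nat \<Rightarrow> 'a \<Rightarrow> real"
  assumes indep: "indep_vars (\<lambda>_. borel) X UNIV"
    and ident: "\<And>t. distr M borel (X t) = distr M borel (X 0)"
    and integrable: "integrable M (X 0)"
  shows "AE w in M. (\<lambda>n. (\<Sum>t<n. X t w) / n) \<longlonglongrightarrow> expectation (X 0)"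
proof -
  interpret pos: iid_nonneg M "\<lambda>t w. max (X t w) 0"
  proof
    show "indep_vars (\<lambda>_. borel) (\<lambda>t w. max (X t w) 0) UNIV"
      and "distr M borel (\<lambda>w. max (X t w) 0) = distr M borel (\<lambda>w. max (X 0 w) 0)" for t
      by (rule iid_comp[OF indep ident]; measurable)+
  qed (use integrable in auto)
  interpret neg: iid_nonneg M "\<lambda>t w. max (- X t w) 0"
  proof
    show "indep_vars (\<lambda>_. borel) (\<lambda>t w. max (- X t w) 0) UNIV"
      and "distr M borel (\<lambda>w. max (- X t w) 0) = distr M borel (\<lambda>w. max (- X 0 w) 0)" for t
      by (rule iid_comp[OF indep ident]; measurable)+
  qed (use integrable in auto)
  have parts: "x = max x 0 - max (- x) 0" for x :: real by auto
  have "expectation (X 0) = expectation (\<lambda>w. max (X 0 w) 0 - max (- X 0 w) 0)"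
    by (simp flip: parts)
  also have "\<dots> = expectation (\<lambda>w. max (X 0 w) 0) - expectation (\<lambda>w. max (- X 0 w) 0)"
    using integrable by (intro Bochner_Integration.integral_diff) auto
  finally have mean: "expectation (X 0) = \<dots>" .
  have "(\<Sum>t<n. X t w) = (\<Sum>t<n. max (X t w) 0 - max (- X t w) 0)" for n w
    by (simp flip: parts)
  then have sums: "(\<Sum>t<n. X t w) / n = (\<Sum>t<n. max (X t w) 0) / n - (\<Sum>t<n. max (- X t w) 0) / n"
    for n w by (simp add: sum_subtractf diff_divide_distrib)
  show ?thesis
    using pos.slln_nonneg neg.slln_nonneg unfolding mean sums by eventually_elim (rule tendsto_diff)
qed

corollary (in prob_space) slln_comp:
  fixes V :: "nat \<Rightarrow> 'a \<Rightarrow> 'b" and g :: "'b \<Rightarrow> real"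
  assumes indep: "indep_vars (\<lambda>_. N) V UNIV" and ident: "\<And>t. distr M N (V t) = distr M N (V 0)"
    and g: "g \<in> borel_measurable N" and integrable: "integrable M (\<lambda>w. g (V 0 w))"
  shows "AE w in M. (\<lambda>n. (\<Sum>t<n. g (V t w)) / n) \<longlonglongrightarrow> expectation (\<lambda>w. g (V 0 w))"
  using slln[OF iid_comp(1)[OF indep ident g] iid_comp(2)[OF indep ident g] integrable] .

section \<open>Square-integrable variables and covariance\<close>

definition square_integrable :: "'a measure \<Rightarrow> ('a \<Rightarrow> real) \<Rightarrow> bool" where
  "square_integrable M f \<longleftrightarrow> f \<in> borel_measurable M \<and> integrable M (\<lambda>w. (f w)\<^sup>2)"

lemma integrable_mult_if_square_integrable:
  assumes "square_integrable M f" "square_integrable M g"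
  shows "integrable M (\<lambda>w. f w * g w)"
proof (rule Bochner_Integration.integrable_bound[where f = "\<lambda>w. (f w)\<^sup>2 + (g w)\<^sup>2"])
  show "integrable M (\<lambda>w. (f w)\<^sup>2 + (g w)\<^sup>2)" "(\<lambda>w. f w * g w) \<in> borel_measurable M"
    using assms unfolding square_integrable_def by auto
  have "\<bar>x * y\<bar> \<le> x\<^sup>2 + y\<^sup>2" for x y :: real
  proof -
    have "0 \<le> (\<bar>x\<bar> - \<bar>y\<bar>)\<^sup>2 + x\<^sup>2 + y\<^sup>2" by simp
    then show ?thesis by (simp add: power2_eq_square algebra_simps abs_mult)
  qed
  then show "AE w in M. norm (f w * g w) \<le> norm ((f w)\<^sup>2 + (g w)\<^sup>2)" by simp
qed

lemma square_integrable_add: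
  assumes "square_integrable M f" "square_integrable M g"
  shows "square_integrable M (\<lambda>w. f w + g w)"
proof -
  have "integrable M (\<lambda>w. (f w)\<^sup>2 + 2 * (f w * g w) + (g w)\<^sup>2)"
    using assms integrable_mult_if_square_integrable[OF assms] unfolding square_integrable_def by auto
  moreover have "(\<lambda>w. (f w + g w)\<^sup>2) = (\<lambda>w. (f w)\<^sup>2 + 2 * (f w * g w) + (g w)\<^sup>2)"
    by (auto simp: power2_sum fun_eq_iff)
  moreover have [measurable]: "f \<in> borel_measurable M" "g \<in> borel_measurable M"
    using assms unfolding square_integrable_def by auto
  moreover have "(\<lambda>w. f w + g w) \<in> borel_measurable M" by measurable
  ultimately show ?thesis unfolding square_integrable_def by simp
qed

lemma square_integrable_sum:
  "(\<And>i. i \<in> S \<Longrightarrow> square_integrable M (f i)) \<Longrightarrow> square_integrable M (\<lambda>w. \<Sum>i\<in>S. f i w)"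
proof (induction S rule: infinite_finite_induct)
  case (insert x F)
  then show ?case by (simp add: square_integrable_add)
qed (simp_all add: square_integrable_def)

lemma square_integrable_divide:
  assumes "square_integrable M f"
  shows "square_integrable M (\<lambda>w. f w / c)"
proof -
  have [measurable]: "f \<in> borel_measurable M" using assms unfolding square_integrable_def by simp
  have "(\<lambda>w. f w / c) \<in> borel_measurable M" by measurable
  then show ?thesis using assms unfolding square_integrable_def by (simp add: power_divide)
qed

context prob_space
begin

lemma integrable_if_square_integrable: "square_integrable M f \<Longrightarrow> integrable M f"
  unfolding square_integrable_def by (auto intro: square_integrable_imp_integrable)

lemma pcov_eq_expectation:
  assumes "square_integrable M f" "square_integrable M g"
  shows "pcov M f g = expectation (\<lambda>w. f w * g w) - expectation f * expectation g"
proof -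
  have "pcov M f g = expectation (\<lambda>w. f w * g w - expectation g * f w - expectation f * g w
      + expectation f * expectation g)"
    unfolding pcov_def pexp_def by (rule Bochner_Integration.integral_cong) (auto simp: algebra_simps)
  also have "\<dots> = expectation (\<lambda>w. f w * g w) - expectation f * expectation g"
    using integrable_if_square_integrable[OF assms(1)] integrable_if_square_integrable[OF assms(2)]
      integrable_mult_if_square_integrable[OF assms] by (simp add: prob_space)
  finally show ?thesis .
qed

lemma pcov_commute: "pcov M f g = pcov M g f"
  unfolding pcov_def by (simp add: mult.commute)

lemma pvar_eq_pcov: "pvar M f = pcov M f f"
  unfolding pvar_def pcov_def by (simp add: power2_eq_square)

lemma pcov_eq_pcor_mult: "pvar M f * pvar M g \<noteq> 0 \<Longrightarrow> pcov M f g = pcor M f g * sqrt (pvar M f * pvar M g)"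
  unfolding pcor_def by simp

lemma pcov_add_add:
  assumes "square_integrable M f1" "square_integrable M f2" "square_integrable M g1" "square_integrable M g2"
  shows "pcov M (\<lambda>w. f1 w + f2 w) (\<lambda>w. g1 w + g2 w) = pcov M f1 g1 + pcov M f1 g2 + pcov M f2 g1 + pcov M f2 g2"
proof -
  have "integrable M f1" "integrable M f2" "integrable M g1" "integrable M g2"
    "integrable M (\<lambda>w. f1 w * g1 w)" "integrable M (\<lambda>w. f1 w * g2 w)"
    "integrable M (\<lambda>w. f2 w * g1 w)" "integrable M (\<lambda>w. f2 w * g2 w)"
    using assms by (simp_all add: integrable_if_square_integrable integrable_mult_if_square_integrable)
  then show ?thesis using assms by (simp add: pcov_eq_expectation square_integrable_add algebra_simps)
qed

lemma pcov_sum_sum: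
  assumes "finite S" "finite S'"
    and f: "\<And>i. i \<in> S \<Longrightarrow> square_integrable M (f i)" and g: "\<And>j. j \<in> S' \<Longrightarrow> square_integrable M (g j)"
  shows "pcov M (\<lambda>w. \<Sum>i\<in>S. f i w) (\<lambda>w. \<Sum>j\<in>S'. g j w) = (\<Sum>i\<in>S. \<Sum>j\<in>S'. pcov M (f i) (g j))"
proof -
  have int: "\<And>i. i \<in> S \<Longrightarrow> integrable M (f i)" "\<And>j. j \<in> S' \<Longrightarrow> integrable M (g j)"
    "\<And>i j. i \<in> S \<Longrightarrow> j \<in> S' \<Longrightarrow> integrable M (\<lambda>w. f i w * g j w)"
    using f g by (simp_all add: integrable_if_square_integrable integrable_mult_if_square_integrable)
  have "pcov M (\<lambda>w. \<Sum>i\<in>S. f i w) (\<lambda>w. \<Sum>j\<in>S'. g j w)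
      = expectation (\<lambda>w. (\<Sum>i\<in>S. f i w) * (\<Sum>j\<in>S'. g j w))
        - expectation (\<lambda>w. \<Sum>i\<in>S. f i w) * expectation (\<lambda>w. \<Sum>j\<in>S'. g j w)"
    by (rule pcov_eq_expectation) (auto intro!: square_integrable_sum f g)
  also have "expectation (\<lambda>w. (\<Sum>i\<in>S. f i w) * (\<Sum>j\<in>S'. g j w))
      = (\<Sum>i\<in>S. \<Sum>j\<in>S'. expectation (\<lambda>w. f i w * g j w))"
    unfolding sum_product using int by (simp add: integral_sum integrable_sum)
  also have "expectation (\<lambda>w. \<Sum>i\<in>S. f i w) = (\<Sum>i\<in>S. expectation (f i))"
    using int by (simp add: integral_sum)
  also have "expectation (\<lambda>w. \<Sum>j\<in>S'. g j w) = (\<Sum>j\<in>S'. expectation (g j))"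
    using int by (simp add: integral_sum)
  also have "(\<Sum>i\<in>S. \<Sum>j\<in>S'. expectation (\<lambda>w. f i w * g j w))
      - (\<Sum>i\<in>S. expectation (f i)) * (\<Sum>j\<in>S'. expectation (g j))
      = (\<Sum>i\<in>S. \<Sum>j\<in>S'. pcov M (f i) (g j))"
    using f g by (simp add: pcov_eq_expectation sum_product sum_subtractf)
  finally show ?thesis .
qed

lemma pcov_divide:
  assumes "square_integrable M f" "square_integrable M g"
  shows "pcov M (\<lambda>w. f w / c) (\<lambda>w. g w / d) = pcov M f g / (c * d)"
proof -
  have "integrable M f" "integrable M g" "integrable M (\<lambda>w. f w * g w)"
    using assms by (simp_all add: integrable_if_square_integrable integrable_mult_if_square_integrable)
  then show ?thesis
    using assms by (simp add: pcov_eq_expectation square_integrable_divide diff_divide_distrib)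
qed

lemma AE_eq_pexp_if_pvar_eq_0:
  assumes "square_integrable M f" "pvar M f = 0"
  shows "AE w in M. f w = pexp M f"
proof -
  have "integrable M f" using assms(1) by (rule integrable_if_square_integrable)
  moreover have "integrable M (\<lambda>w. (f w)\<^sup>2)" using assms(1) unfolding square_integrable_def ..
  ultimately have "integrable M (\<lambda>w. (f w - pexp M f)\<^sup>2)" by (simp add: power2_diff)
  then have "AE w in M. (f w - pexp M f)\<^sup>2 = 0"
    using integral_nonneg_eq_0_iff_AE[of M "\<lambda>w. (f w - pexp M f)\<^sup>2"] assms(2)
    unfolding pvar_def by simp
  then show ?thesis by (rule AE_mp) (intro AE_I2, simp)
qed

end

section \<open>Sample correlation of an i.i.d. sequence\<close>

lemma scov_eq_smean: "scov n a b = smean n (\<lambda>t. a t * b t) - smean n a * smean n b"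
proof (cases "n = 0")
  case False
  then have n: "real n \<noteq> 0" by simp
  have "(\<Sum>t<n. (a t - smean n a) * (b t - smean n b))
      = (\<Sum>t<n. a t * b t) - smean n b * (\<Sum>t<n. a t) - smean n a * (\<Sum>t<n. b t)
        + real n * (smean n a * smean n b)"
    by (simp add: algebra_simps sum.distrib sum_subtractf sum_distrib_left sum_distrib_right)
  also have "(\<Sum>t<n. a t) = real n * smean n a"
    using n by (simp add: smean_def)
  also have "(\<Sum>t<n. b t) = real n * smean n b"
    using n by (simp add: smean_def)
  finally have "(\<Sum>t<n. (a t - smean n a) * (b t - smean n b))
      = (\<Sum>t<n. a t * b t) - real n * (smean n a * smean n b)"
    by (simp add: algebra_simps)
  then show ?thesis unfolding scov_def using n by (simp add: smean_def diff_divide_distrib)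
qed (simp add: scov_def smean_def)

lemma svar_eq_scov: "svar n a = scov n a a"
  unfolding svar_def scov_def by (simp add: power2_eq_square)

lemma scor_tendsto:
  assumes "(\<lambda>n. smean n a) \<longlonglongrightarrow> Ma" "(\<lambda>n. smean n b) \<longlonglongrightarrow> Mb"
    and "(\<lambda>n. smean n (\<lambda>t. a t * b t)) \<longlonglongrightarrow> Mab"
    and "(\<lambda>n. smean n (\<lambda>t. a t * a t)) \<longlonglongrightarrow> Maa" "(\<lambda>n. smean n (\<lambda>t. b t * b t)) \<longlonglongrightarrow> Mbb"
    and "(Maa - Ma * Ma) * (Mbb - Mb * Mb) \<noteq> 0"
  shows "(\<lambda>n. scor n a b) \<longlonglongrightarrow> (Mab - Ma * Mb) / sqrt ((Maa - Ma * Ma) * (Mbb - Mb * Mb))"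
  unfolding scor_def svar_eq_scov scov_eq_smean using assms by (intro tendsto_intros) auto

lemma svar_const: "(\<And>t. a t = c) \<Longrightarrow> svar n a = 0"
  by (cases "n = 0") (simp_all add: svar_def smean_def)

lemma scor_const_left: "(\<And>t. a t = c) \<Longrightarrow> scor n a b = 0"
  unfolding scor_def by (simp add: svar_const)

lemma scor_const_right: "(\<And>t. b t = c) \<Longrightarrow> scor n a b = 0"
  unfolding scor_def by (simp add: svar_const)

context prob_space
begin

lemma AE_comp_eq_pexp_if_pvar_eq_0:
  fixes V :: "nat \<Rightarrow> 'a \<Rightarrow> 'b" and h :: "'b \<Rightarrow> real"
  assumes V: "\<And>t. V t \<in> measurable M N" and ident: "\<And>t. distr M N (V t) = distr M N (V 0)"
    and h [measurable]: "h \<in> borel_measurable N"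
    and sq: "square_integrable M (\<lambda>w. h (V 0 w))" and var: "pvar M (\<lambda>w. h (V 0 w)) = 0"
  shows "AE w in M. \<forall>t. h (V t w) = pexp M (\<lambda>w. h (V 0 w))"
  unfolding AE_all_countable
proof
  fix t
  have same_integral: "(\<integral>w. q (h (V t w)) \<partial>M) = (\<integral>w. q (h (V 0 w)) \<partial>M)"
    and same_integrable: "integrable M (\<lambda>w. q (h (V t w))) \<longleftrightarrow> integrable M (\<lambda>w. q (h (V 0 w)))"
    if [measurable]: "q \<in> borel_measurable borel" for q :: "real \<Rightarrow> real"
    by (intro integral_comp_eq_if_distr_eq[where g = "\<lambda>v. q (h v)", OF V V ident[of t]]
        integrable_comp_iff_if_distr_eq[where g = "\<lambda>v. q (h v)", OF V V ident[of t]]; measurable)+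
  have "square_integrable M (\<lambda>w. h (V t w))"
    using sq same_integrable[of "\<lambda>x. x\<^sup>2"] V unfolding square_integrable_def by simp
  moreover have pexp_eq: "pexp M (\<lambda>w. h (V t w)) = pexp M (\<lambda>w. h (V 0 w))"
    unfolding pexp_def using same_integral[of "\<lambda>x. x"] by simp
  moreover have "pvar M (\<lambda>w. h (V t w)) = 0"
    using var same_integral[of "\<lambda>x. (x - pexp M (\<lambda>w. h (V 0 w)))\<^sup>2"] unfolding pvar_def pexp_eq by simp
  ultimately show "AE w in M. h (V t w) = pexp M (\<lambda>w. h (V 0 w))"
    using AE_eq_pexp_if_pvar_eq_0 by metis
qed

lemma AE_smean_comp_tendsto:
  assumes "indep_vars (\<lambda>_. N) V UNIV" "\<And>t. distr M N (V t) = distr M N (V 0)"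
    and "h \<in> borel_measurable N" "integrable M (\<lambda>w. h (V 0 w))"
  shows "AE w in M. (\<lambda>n. smean n (\<lambda>t. h (V t w))) \<longlonglongrightarrow> expectation (\<lambda>w. h (V 0 w))"
  unfolding smean_def using slln_comp[OF assms] .

lemma AE_scor_eq_0_if_pvar_mult_eq_0:
  fixes V :: "nat \<Rightarrow> 'a \<Rightarrow> 'b" and f g :: "'b \<Rightarrow> real"
  assumes V: "\<And>t. V t \<in> measurable M N" and ident: "\<And>t. distr M N (V t) = distr M N (V 0)"
    and f: "f \<in> borel_measurable N" and g: "g \<in> borel_measurable N"
    and sq_f: "square_integrable M (\<lambda>w. f (V 0 w))" and sq_g: "square_integrable M (\<lambda>w. g (V 0 w))"
    and var: "pvar M (\<lambda>w. f (V 0 w)) * pvar M (\<lambda>w. g (V 0 w)) = 0"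
  shows "AE w in M. \<forall>n. scor n (\<lambda>t. f (V t w)) (\<lambda>t. g (V t w)) = 0"
proof -
  have "AE w in M. (\<forall>t. f (V t w) = pexp M (\<lambda>w. f (V 0 w))) \<or> (\<forall>t. g (V t w) = pexp M (\<lambda>w. g (V 0 w)))"
  proof (cases "pvar M (\<lambda>w. f (V 0 w)) = 0")
    case True
    from AE_comp_eq_pexp_if_pvar_eq_0[where V = V and h = f, OF V ident f sq_f True]
    show ?thesis by eventually_elim simp
  next
    case False
    with var have "pvar M (\<lambda>w. g (V 0 w)) = 0" by simp
    from AE_comp_eq_pexp_if_pvar_eq_0[where V = V and h = g, OF V ident g sq_g this]
    show ?thesis by eventually_elim simp
  qed
  then show ?thesis by eventually_elim (auto simp: scor_const_left scor_const_right)
qed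

lemma AE_scor_tendsto_pcor:
  fixes V :: "nat \<Rightarrow> 'a \<Rightarrow> 'b" and f g :: "'b \<Rightarrow> real"
  assumes indep: "indep_vars (\<lambda>_. N) V UNIV" and ident: "\<And>t. distr M N (V t) = distr M N (V 0)"
    and f [measurable]: "f \<in> borel_measurable N" and g [measurable]: "g \<in> borel_measurable N"
    and sq_f: "square_integrable M (\<lambda>w. f (V 0 w))" and sq_g: "square_integrable M (\<lambda>w. g (V 0 w))"
  shows "AE w in M. (\<lambda>n. scor n (\<lambda>t. f (V t w)) (\<lambda>t. g (V t w)))
    \<longlonglongrightarrow> pcor M (\<lambda>w. f (V 0 w)) (\<lambda>w. g (V 0 w))"
proof (cases "pvar M (\<lambda>w. f (V 0 w)) * pvar M (\<lambda>w. g (V 0 w)) = 0")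
  case True
  then have pcor_0: "pcor M (\<lambda>w. f (V 0 w)) (\<lambda>w. g (V 0 w)) = 0" unfolding pcor_def by simp
  have "V t \<in> measurable M N" for t using indep unfolding indep_vars_def by auto
  from AE_scor_eq_0_if_pvar_mult_eq_0[where V = V and f = f and g = g, OF this ident f g sq_f sq_g True]
  show ?thesis unfolding pcor_0 by eventually_elim simp
next
  case False
  let ?F = "\<lambda>w. f (V 0 w)" and ?G = "\<lambda>w. g (V 0 w)"
  have "AE w in M. (\<lambda>n. smean n (\<lambda>t. f (V t w))) \<longlonglongrightarrow> expectation ?F"
    "AE w in M. (\<lambda>n. smean n (\<lambda>t. g (V t w))) \<longlonglongrightarrow> expectation ?G"
    "AE w in M. (\<lambda>n. smean n (\<lambda>t. f (V t w) * g (V t w))) \<longlonglongrightarrow> expectation (\<lambda>w. ?F w * ?G w)"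
    "AE w in M. (\<lambda>n. smean n (\<lambda>t. f (V t w) * f (V t w))) \<longlonglongrightarrow> expectation (\<lambda>w. ?F w * ?F w)"
    "AE w in M. (\<lambda>n. smean n (\<lambda>t. g (V t w) * g (V t w))) \<longlonglongrightarrow> expectation (\<lambda>w. ?G w * ?G w)"
    using AE_smean_comp_tendsto[OF indep ident, of f] AE_smean_comp_tendsto[OF indep ident, of g]
      AE_smean_comp_tendsto[OF indep ident, of "\<lambda>v. f v * g v"]
      AE_smean_comp_tendsto[OF indep ident, of "\<lambda>v. f v * f v"]
      AE_smean_comp_tendsto[OF indep ident, of "\<lambda>v. g v * g v"]
      integrable_if_square_integrable[OF sq_f] integrable_if_square_integrable[OF sq_g]
      integrable_mult_if_square_integrable[OF sq_f sq_g] integrable_mult_if_square_integrable[OF sq_f sq_f]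
      integrable_mult_if_square_integrable[OF sq_g sq_g]
    by simp_all
  then show ?thesis
  proof eventually_elim
    case (elim w)
    with False show ?case
      unfolding pcor_def pvar_eq_pcov pcov_eq_expectation[OF sq_f sq_g]
        pcov_eq_expectation[OF sq_f sq_f] pcov_eq_expectation[OF sq_g sq_g]
      by (simp add: scor_tendsto)
  qed
qed

end

section \<open>Correlation of cluster means\<close>

context prob_space
begin

lemma AE_scor_cluster_means_tendsto_pcor:
  fixes Y :: "nat \<Rightarrow> 'i \<Rightarrow> 'a \<Rightarrow> real" and Z :: "nat \<Rightarrow> 'j \<Rightarrow> 'a \<Rightarrow> real"
  assumes indep: "indep_vars (\<lambda>_. Pi\<^sub>M UNIV (\<lambda>_. borel))
      (\<lambda>t w k. case k of Inl i \<Rightarrow> Y t i w | Inr j \<Rightarrow> Z t j w) UNIV"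
    and ident: "\<And>t. distr M (Pi\<^sub>M UNIV (\<lambda>_. borel)) (\<lambda>w k. case k of Inl i \<Rightarrow> Y t i w | Inr j \<Rightarrow> Z t j w)
      = distr M (Pi\<^sub>M UNIV (\<lambda>_. borel)) (\<lambda>w k. case k of Inl i \<Rightarrow> Y 0 i w | Inr j \<Rightarrow> Z 0 j w)"
    and sq: "\<And>i. square_integrable M (Y 0 i)" "\<And>j. square_integrable M (Z 0 j)"
  shows "AE w in M. (\<lambda>n. scor n (\<lambda>t. (\<Sum>i\<in>S. Y t i w) / card S) (\<lambda>t. (\<Sum>j\<in>T. Z t j w) / card T))
    \<longlonglongrightarrow> pcor M (\<lambda>w. (\<Sum>i\<in>S. Y 0 i w) / card S) (\<lambda>w. (\<Sum>j\<in>T. Z 0 j w) / card T)"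
proof -
  have "(\<lambda>v. (\<Sum>i\<in>S. v (Inl i)) / real (card S)) \<in> borel_measurable (Pi\<^sub>M UNIV (\<lambda>_. borel))"
    "(\<lambda>v. (\<Sum>j\<in>T. v (Inr j)) / real (card T)) \<in> borel_measurable (Pi\<^sub>M UNIV (\<lambda>_. borel))"
    by measurable
  from AE_scor_tendsto_pcor[OF indep ident this] sq show ?thesis
    by (simp add: square_integrable_divide square_integrable_sum)
qed

lemma pcov_signal_plus_noise:
  assumes sq: "\<And>i. square_integrable M (X i)" "\<And>i. square_integrable M (e i)"
    and var_X: "\<And>i. pvar M (X i) = s" and s: "0 < s" and cor_X: "\<And>i i'. pcor M (X i) (X i') = \<eta> i i'"
    and var_e: "\<And>i. pvar M (e i) = g" and cov_ee: "\<And>i i'. i \<noteq> i' \<Longrightarrow> pcov M (e i) (e i') = 0"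
    and cov_eX: "\<And>i i'. pcov M (e i) (X i') = 0"
  shows "pcov M (\<lambda>w. X i w + e i w) (\<lambda>w. X i' w + e i' w) = s * \<eta> i i' + (if i = i' then g else 0)"
proof -
  have "pcov M (X i) (X i') = s * \<eta> i i'"
    using pcov_eq_pcor_mult[of "X i" "X i'"] s by (simp add: var_X cor_X)
  moreover have "pcov M (X i) (e i') = 0" using cov_eX pcov_commute by metis
  moreover have "pcov M (e i) (e i') = (if i = i' then g else 0)"
    using cov_ee var_e pvar_eq_pcov by metis
  ultimately show ?thesis by (simp add: pcov_add_add sq cov_eX)
qed

lemma pcov_signal_plus_noise_cross:
  assumes sq: "\<And>i. square_integrable M (X i)" "\<And>i. square_integrable M (e i)"
    "\<And>j. square_integrable M (X' j)" "\<And>j. square_integrable M (e' j)"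
    and var_X: "\<And>i. pvar M (X i) = s" "0 < s" and var_X': "\<And>j. pvar M (X' j) = s'" "0 < s'"
    and cor: "\<And>i j. pcor M (X i) (X' j) = \<rho>"
    and unc: "\<And>i j. pcov M (e i) (e' j) = 0" "\<And>i j. pcov M (e i) (X' j) = 0"
      "\<And>i j. pcov M (e' j) (X i) = 0"
  shows "pcov M (\<lambda>w. X i w + e i w) (\<lambda>w. X' j w + e' j w) = \<rho> * sqrt (s * s')"
proof -
  have "pcov M (X i) (X' j) = \<rho> * sqrt (s * s')"
    using pcov_eq_pcor_mult[of "X i" "X' j"] var_X var_X' by (simp add: cor)
  moreover have "pcov M (X i) (e' j) = 0" using unc(3) pcov_commute by metis
  ultimately show ?thesis by (simp add: pcov_add_add sq unc)
qed

lemma pcov_cluster_means: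
  fixes Y :: "'i \<Rightarrow> 'a \<Rightarrow> real" and Z :: "'j \<Rightarrow> 'a \<Rightarrow> real"
  assumes "finite S" "finite T" "\<And>i. square_integrable M (Y i)" "\<And>j. square_integrable M (Z j)"
  shows "pcov M (\<lambda>w. (\<Sum>i\<in>S. Y i w) / card S) (\<lambda>w. (\<Sum>j\<in>T. Z j w) / card T)
    = (\<Sum>i\<in>S. \<Sum>j\<in>T. pcov M (Y i) (Z j)) / (card S * card T)"
  using assms by (simp add: pcov_divide square_integrable_sum pcov_sum_sum)

lemma pvar_cluster_mean:
  fixes Y :: "'i \<Rightarrow> 'a \<Rightarrow> real" and s g :: real
  assumes "finite S" "S \<noteq> {}" "\<And>i. square_integrable M (Y i)" "0 < s"
    and cov: "\<And>i i'. pcov M (Y i) (Y i') = s * \<eta> i i' + (if i = i' then g else 0)"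
  shows "pvar M (\<lambda>w. (\<Sum>i\<in>S. Y i w) / card S)
    = s * ((\<Sum>i\<in>S. \<Sum>i'\<in>S. \<eta> i i') / (real (card S))\<^sup>2 + g / (real (card S) * s))"
proof -
  have "(\<Sum>i\<in>S. \<Sum>i'\<in>S. s * \<eta> i i' + (if i = i' then g else 0)) = s * (\<Sum>i\<in>S. \<Sum>i'\<in>S. \<eta> i i') + card S * g"
    using assms(1) by (simp add: sum.distrib sum_distrib_left)
  then show ?thesis
    using assms unfolding pvar_eq_pcov
    by (simp add: pcov_cluster_means cov field_simps power2_eq_square)
qed

lemma pcor_cluster_means:
  fixes X e :: "'i \<Rightarrow> 'a \<Rightarrow> real" and X' e' :: "'j \<Rightarrow> 'a \<Rightarrow> real" and s g s' g' \<rho> :: real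
  assumes S: "finite S" "S \<noteq> {}" and T: "finite T" "T \<noteq> {}"
    and sq: "\<And>i. square_integrable M (X i)" "\<And>i. square_integrable M (e i)"
      "\<And>j. square_integrable M (X' j)" "\<And>j. square_integrable M (e' j)"
    and var: "\<And>i. pvar M (X i) = s" "\<And>i. pvar M (e i) = g" "\<And>j. pvar M (X' j) = s'" "\<And>j. pvar M (e' j) = g'"
    and pos: "0 < s" "0 < s'"
    and cor: "\<And>i i'. pcor M (X i) (X i') = \<eta> i i'" "\<And>j j'. pcor M (X' j) (X' j') = \<eta>' j j'"
      "\<And>i j. pcor M (X i) (X' j) = \<rho>"
    and unc: "\<And>i i'. i \<noteq> i' \<Longrightarrow> pcov M (e i) (e i') = 0" "\<And>j j'. j \<noteq> j' \<Longrightarrow> pcov M (e' j) (e' j') = 0"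
      "\<And>i j. pcov M (e i) (e' j) = 0" "\<And>i i'. pcov M (e i) (X i') = 0" "\<And>i j. pcov M (e i) (X' j) = 0"
      "\<And>j i. pcov M (e' j) (X i) = 0" "\<And>j j'. pcov M (e' j) (X' j') = 0"
  shows "pcor M (\<lambda>w. (\<Sum>i\<in>S. X i w + e i w) / card S) (\<lambda>w. (\<Sum>j\<in>T. X' j w + e' j w) / card T)
    = \<rho> / sqrt (((\<Sum>i\<in>S. \<Sum>i'\<in>S. \<eta> i i') / (real (card S))\<^sup>2 + g / (real (card S) * s))
                * ((\<Sum>j\<in>T. \<Sum>j'\<in>T. \<eta>' j j') / (real (card T))\<^sup>2 + g' / (real (card T) * s')))"
    (is "_ = \<rho> / sqrt (?b * ?b')")
proof -
  have sq_sum: "square_integrable M (\<lambda>w. X i w + e i w)" "square_integrable M (\<lambda>w. X' j w + e' j w)"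
    for i j using sq by (simp_all add: square_integrable_add)
  have "pcov M (\<lambda>w. (\<Sum>i\<in>S. X i w + e i w) / card S) (\<lambda>w. (\<Sum>j\<in>T. X' j w + e' j w) / card T)
      = \<rho> * sqrt (s * s')"
    using S T sq_sum pcov_signal_plus_noise_cross[where X = X and e = e and X' = X' and e' = e',
        OF sq var(1) pos(1) var(3) pos(2) cor(3) unc(3,5,6)]
    by (simp add: pcov_cluster_means)
  moreover have "pvar M (\<lambda>w. (\<Sum>i\<in>S. X i w + e i w) / card S) = s * ?b"
    using S sq_sum pos
    by (intro pvar_cluster_mean
        pcov_signal_plus_noise[where X = X and e = e, OF sq(1,2) var(1) pos(1) cor(1) var(2) unc(1,4)])
  moreover have "pvar M (\<lambda>w. (\<Sum>j\<in>T. X' j w + e' j w) / card T) = s' * ?b'"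
    using T sq_sum pos
    by (intro pvar_cluster_mean
        pcov_signal_plus_noise[where X = X' and e = e', OF sq(3,4) var(3) pos(2) cor(2) var(4) unc(2,7)])
  moreover have "sqrt (s * ?b * (s' * ?b')) = sqrt (s * s') * sqrt (?b * ?b')"
    by (simp add: real_sqrt_mult[symmetric] ac_simps)
  ultimately show ?thesis unfolding pcor_def using pos by simp
qed

end

theorem corollary1:
  fixes M :: "'w measure"
    and XA eA :: "nat \<Rightarrow> 'a::finite \<Rightarrow> 'w \<Rightarrow> real"
    and XB eB :: "nat \<Rightarrow> 'b::finite \<Rightarrow> 'w \<Rightarrow> real"
    and sA2 gA2 sB2 gB2 rho :: real
    and etaA :: "'a \<Rightarrow> 'a \<Rightarrow> real" and etaB :: "'b \<Rightarrow> 'b \<Rightarrow> real"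
    and CA :: "'a set set" and CB :: "'b set set"
  assumes P: "prob_space M"
    and measA: "\<And>t i. XA t i \<in> borel_measurable M" "\<And>t i. eA t i \<in> borel_measurable M"
    and measB: "\<And>t j. XB t j \<in> borel_measurable M" "\<And>t j. eB t j \<in> borel_measurable M"
    and sqA: "\<And>t i. integrable M (\<lambda>w. (XA t i w)\<^sup>2)" "\<And>t i. integrable M (\<lambda>w. (eA t i w)\<^sup>2)"
    and sqB: "\<And>t j. integrable M (\<lambda>w. (XB t j w)\<^sup>2)" "\<And>t j. integrable M (\<lambda>w. (eB t j w)\<^sup>2)"
    and sA_pos: "sA2 > 0" and sB_pos: "sB2 > 0"
    and varXA: "\<And>t i. pvar M (XA t i) = sA2" and vareA: "\<And>t i. pvar M (eA t i) = gA2"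
    and varXB: "\<And>t j. pvar M (XB t j) = sB2" and vareB: "\<And>t j. pvar M (eB t j) = gB2"
    and unc_eAeA: "\<And>t i i'. i \<noteq> i' \<Longrightarrow> pcov M (eA t i) (eA t i') = 0"
    and unc_eBeB: "\<And>t j j'. j \<noteq> j' \<Longrightarrow> pcov M (eB t j) (eB t j') = 0"
    and unc_eAeB: "\<And>t i j. pcov M (eA t i) (eB t j) = 0"
    and unc_eAXA: "\<And>t i i'. pcov M (eA t i) (XA t i') = 0"
    and unc_eAXB: "\<And>t i j. pcov M (eA t i) (XB t j) = 0"
    and unc_eBXA: "\<And>t j i. pcov M (eB t j) (XA t i) = 0"
    and unc_eBXB: "\<And>t j j'. pcov M (eB t j) (XB t j') = 0"
    and etaA_def: "\<And>t i i'. pcor M (XA t i) (XA t i') = etaA i i'"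
    and etaB_def: "\<And>t j j'. pcor M (XB t j) (XB t j') = etaB j j'"
    and corAB: "\<And>t i j. pcor M (XA t i) (XB t j) = rho"
    and indep: "prob_space.indep_vars M (\<lambda>_. Pi\<^sub>M UNIV (\<lambda>_. borel))
        (\<lambda>t w. \<lambda>k. case k of Inl i \<Rightarrow> XA t i w + eA t i w | Inr j \<Rightarrow> XB t j w + eB t j w) UNIV"
    and ident: "\<And>t. distr M (Pi\<^sub>M UNIV (\<lambda>_. borel))
          (\<lambda>w. \<lambda>k. case k of Inl i \<Rightarrow> XA t i w + eA t i w | Inr j \<Rightarrow> XB t j w + eB t j w)
        = distr M (Pi\<^sub>M UNIV (\<lambda>_. borel))
          (\<lambda>w. \<lambda>k. case k of Inl i \<Rightarrow> XA 0 i w + eA 0 i w | Inr j \<Rightarrow> XB 0 j w + eB 0 j w)"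
    and partA: "partition_on (UNIV :: 'a set) CA"
    and partB: "partition_on (UNIV :: 'b set) CB"
  shows "AE w in M.
    (\<lambda>n. (1 / (real (card CA) * real (card CB))) *
       (\<Sum>\<nu>A\<in>CA. \<Sum>\<nu>B\<in>CB.
          scor n (\<lambda>t. (\<Sum>i\<in>\<nu>A. XA t i w + eA t i w) / real (card \<nu>A))
                 (\<lambda>t. (\<Sum>j\<in>\<nu>B. XB t j w + eB t j w) / real (card \<nu>B))))
    \<longlonglongrightarrow>
    (1 / (real (card CA) * real (card CB))) *
       (\<Sum>\<nu>A\<in>CA. \<Sum>\<nu>B\<in>CB.
          rho / sqrt (((\<Sum>i\<in>\<nu>A. \<Sum>i'\<in>\<nu>A. etaA i i') / (real (card \<nu>A))\<^sup>2
                        + gA2 / (real (card \<nu>A) * sA2))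
                    * ((\<Sum>j\<in>\<nu>B. \<Sum>j'\<in>\<nu>B. etaB j j') / (real (card \<nu>B))\<^sup>2
                        + gB2 / (real (card \<nu>B) * sB2))))"
proof -
  interpret prob_space M by (rule P)
  define r where "r n w \<nu>A \<nu>B = scor n (\<lambda>t. (\<Sum>i\<in>\<nu>A. XA t i w + eA t i w) / real (card \<nu>A))
    (\<lambda>t. (\<Sum>j\<in>\<nu>B. XB t j w + eB t j w) / real (card \<nu>B))" for n w \<nu>A \<nu>B
  define \<rho>\<^sub>C\<^sub>L\<^sub>A where "\<rho>\<^sub>C\<^sub>L\<^sub>A \<nu>A \<nu>B = rho / sqrt (((\<Sum>i\<in>\<nu>A. \<Sum>i'\<in>\<nu>A. etaA i i') / (real (card \<nu>A))\<^sup>2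
    + gA2 / (real (card \<nu>A) * sA2)) * ((\<Sum>j\<in>\<nu>B. \<Sum>j'\<in>\<nu>B. etaB j j') / (real (card \<nu>B))\<^sup>2
    + gB2 / (real (card \<nu>B) * sB2)))" for \<nu>A \<nu>B
  have sq: "square_integrable M (XA t i)" "square_integrable M (eA t i)"
    "square_integrable M (XB t j)" "square_integrable M (eB t j)" for t i j
    using measA measB sqA sqB unfolding square_integrable_def by auto
  have "AE w in M. (\<lambda>n. r n w \<nu>A \<nu>B) \<longlonglongrightarrow> \<rho>\<^sub>C\<^sub>L\<^sub>A \<nu>A \<nu>B" if "\<nu>A \<in> CA" "\<nu>B \<in> CB" for \<nu>A \<nu>B
  proof -
    have "finite \<nu>A" "\<nu>A \<noteq> {}" "finite \<nu>B" "\<nu>B \<noteq> {}"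
      using that partA partB by (auto simp: partition_on_def)
    then have "pcor M (\<lambda>w. (\<Sum>i\<in>\<nu>A. XA 0 i w + eA 0 i w) / card \<nu>A)
        (\<lambda>w. (\<Sum>j\<in>\<nu>B. XB 0 j w + eB 0 j w) / card \<nu>B) = \<rho>\<^sub>C\<^sub>L\<^sub>A \<nu>A \<nu>B"
      unfolding \<rho>\<^sub>C\<^sub>L\<^sub>A_def
      by (intro pcor_cluster_means[where X = "XA 0" and e = "eA 0" and X' = "XB 0" and e' = "eB 0"])
        (simp_all add: sq varXA vareA varXB vareB sA_pos sB_pos etaA_def etaB_def corAB
          unc_eAeA unc_eBeB unc_eAeB unc_eAXA unc_eAXB unc_eBXA unc_eBXB)
    with AE_scor_cluster_means_tendsto_pcor[OF indep ident, where S = \<nu>A and T = \<nu>B] sq show ?thesis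
      unfolding r_def by (simp add: square_integrable_add)
  qed
  then have "AE w in M. \<forall>p\<in>CA \<times> CB. (\<lambda>n. r n w (fst p) (snd p)) \<longlonglongrightarrow> \<rho>\<^sub>C\<^sub>L\<^sub>A (fst p) (snd p)"
    by (intro AE_finite_allI) auto
  then show ?thesis unfolding r_def \<rho>\<^sub>C\<^sub>L\<^sub>A_def
    by eventually_elim (intro tendsto_mult_left tendsto_sum, auto)
qed

end
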